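(* Let $(M,d)$ be a compact metric space, $\varphi:M\to M$ continuous, and $\mathcal G=\{G_n\}_{n\ge1}\subset B(M)$. If $\mathcal G$ satisfies any of the following, it is asymptotically additive: (1) $G_n=S_nG$ for all $n$ with $G\in C(M)$; (2) $G_n=S_nG$ for all $n$ with $G\in B(M)$, and $\mathcal G$ has tempered variation; (3) $\mathcal G$ is weakly almost additive and $G_n\in C(M)$ for each $n$; (4) $\mathcal G$ is weakly almost additive and has tempered variation. If $\mathcal G\subset C(M)$, then asymptotic additivity of $\mathcal G$ is equivalent to: (5) $\lim_{k\to\infty}\limsup_{n\to\infty}n^{-1}\|G_n-k^{-1}S_nG_k\|_\infty=0$. For $\mathcal G\subset B(M)$, each of the following is equivalent to asymptotic additivity of $\mathcal G$: (6) $\mathcal G$ has tempered variation and satisfies the relation in (5); (7) $\mathcal G$ has tempered variation and there is $\{G^{(k)}\}\subset B(M)$ with $\lim_k\limsup_nn^{-1}\|G_n-S_nG^{(k)}\|_\infty=0$; (8) there is $\{G^{(k)}\}\subset B(M)$ with $\lim_k\limsup_nn^{-1}\|G_n-S_nG^{(k)}\|_\infty=0$ and $\lim_{k\to\infty}\lim_{\epsilon\downarrow0}\limsup_{n\to\infty}\sup_{x\in M}\sup_{y,z\in B_n(x,\epsilon)}\frac1n|S_nG^{(k)}(y)-S_nG^{(k)}(z)|=0$.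
   Context: $C(M)$ (resp. $B(M)$): real continuous (resp. bounded Borel) functions on $M$, $\|f\|_\infty=\sup|f|$. $S_nG=\sum_{k=0}^{n-1}G\circ\varphi^k$. $B_n(x,\epsilon)=\{y:d(\varphi^ky,\varphi^kx)<\epsilon,\ 0\le k\le n-1\}$. $\mathcal G$ is asymptotically additive if there is $\{G^{(k)}\}\subset C(M)$ with $\lim_k\limsup_nn^{-1}\|G_n-S_nG^{(k)}\|_\infty=0$. Tempered variation: $\lim_{\epsilon\downarrow0}\limsup_{n\to\infty}\sup_{x\in M}\sup_{y,z\in B_n(x,\epsilon)}\frac1n|G_n(y)-G_n(z)|=0$. Weakly almost additive: there is a real sequence $\{C_n\}$ with $C_n/n\to0$ and $-C_m+G_m+G_n\circ\varphi^m\le G_{m+n}\le C_m+G_m+G_n\circ\varphi^m$ for all $m,n\ge1$. *)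

theory Defs
  imports "HOL-Analysis.Analysis"
begin

text \<open>The compact metric space M is the whole carrier type 'a.\<close>

definition birkhoff_sum :: "('a \<Rightarrow> 'a) \<Rightarrow> ('a \<Rightarrow> real) \<Rightarrow> nat \<Rightarrow> 'a \<Rightarrow> real" where
  "birkhoff_sum \<phi> g n x = (\<Sum>k<n. g ((\<phi> ^^ k) x))"

definition bowen_ball :: "('a::metric_space \<Rightarrow> 'a) \<Rightarrow> nat \<Rightarrow> 'a \<Rightarrow> real \<Rightarrow> 'a set" where
  "bowen_ball \<phi> n x \<epsilon> = {y. \<forall>k<n. dist ((\<phi> ^^ k) y) ((\<phi> ^^ k) x) < \<epsilon>}"

definition bfun :: "('a::metric_space \<Rightarrow> real) \<Rightarrow> bool" where
  "bfun f \<longleftrightarrow> f \<in> borel_measurable borel \<and> bounded (range f)"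

definition supnorm :: "('a \<Rightarrow> real) \<Rightarrow> real" where
  "supnorm f = (SUP x. \<bar>f x\<bar>)"

definition var_n :: "('a::metric_space \<Rightarrow> 'a) \<Rightarrow> (nat \<Rightarrow> 'a \<Rightarrow> real) \<Rightarrow> nat \<Rightarrow> real \<Rightarrow> ereal" where
  "var_n \<phi> F n \<epsilon> = (SUP x. SUP y\<in>bowen_ball \<phi> n x \<epsilon>. SUP z\<in>bowen_ball \<phi> n x \<epsilon>.
      ereal (\<bar>F n y - F n z\<bar> / real n))"

definition tempered_variation :: "('a::metric_space \<Rightarrow> 'a) \<Rightarrow> (nat \<Rightarrow> 'a \<Rightarrow> real) \<Rightarrow> bool" where
  "tempered_variation \<phi> F \<longleftrightarrow> ((\<lambda>\<epsilon>. limsup (\<lambda>n. var_n \<phi> F n \<epsilon>)) \<longlongrightarrow> 0) (at_right 0)"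

definition asymp_approx :: "('a \<Rightarrow> 'a) \<Rightarrow> (nat \<Rightarrow> 'a \<Rightarrow> real) \<Rightarrow> (nat \<Rightarrow> 'a \<Rightarrow> real) \<Rightarrow> bool" where
  "asymp_approx \<phi> G Gk \<longleftrightarrow>
     (\<lambda>k. limsup (\<lambda>n. ereal (supnorm (\<lambda>x. G n x - birkhoff_sum \<phi> (Gk k) n x) / real n)))
       \<longlonglongrightarrow> 0"

definition asymptotically_additive :: "('a::metric_space \<Rightarrow> 'a) \<Rightarrow> (nat \<Rightarrow> 'a \<Rightarrow> real) \<Rightarrow> bool" where
  "asymptotically_additive \<phi> G \<longleftrightarrow>
     (\<exists>Gk. (\<forall>k. continuous_on UNIV (Gk k)) \<and> asymp_approx \<phi> G Gk)"

definition weakly_almost_additive :: "('a \<Rightarrow> 'a) \<Rightarrow> (nat \<Rightarrow> 'a \<Rightarrow> real) \<Rightarrow> bool" where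
  "weakly_almost_additive \<phi> G \<longleftrightarrow>
     (\<exists>C :: nat \<Rightarrow> real. (\<lambda>n. C n / real n) \<longlonglongrightarrow> 0 \<and>
        (\<forall>m\<ge>1. \<forall>n\<ge>1. \<forall>x.
           - C m + G m x + G n ((\<phi> ^^ m) x) \<le> G (m + n) x \<and>
           G (m + n) x \<le> C m + G m x + G n ((\<phi> ^^ m) x)))"

definition cond5 :: "('a \<Rightarrow> 'a) \<Rightarrow> (nat \<Rightarrow> 'a \<Rightarrow> real) \<Rightarrow> bool" where
  "cond5 \<phi> G \<longleftrightarrow>
     (\<lambda>k. limsup (\<lambda>n. ereal (supnorm (\<lambda>x. G n x - birkhoff_sum \<phi> (G k) n x / real k) / real n)))
       \<longlonglongrightarrow> 0"

end

theory Submission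
  imports Defs
begin

text \<open>Everything reduces to two properties of \<open>G\<close>: tempered variation, and uniform approximation
  of \<open>G\<^sub>n\<close> by the Birkhoff sums of the averages \<open>G\<^sub>k / k\<close>, which is condition (5).
  Birkhoff sums of a continuous function have tempered variation by uniform continuity, and
  tempered variation passes to anything they approximate; a bounded approximant \<open>g\<close> yields (5)
  because averaging \<open>S\<^sub>k g\<close> along an orbit reproduces \<open>S\<^sub>n g\<close> up to an error \<open>O(k\<^sup>2)\<close>.
  Conversely, under tempered variation \<open>G\<^sub>k / k\<close> oscillates little on small metric balls, which
  lie in Bowen balls by uniform continuity of the first \<open>k\<close> iterates of \<open>\<phi>\<close>; so it is uniformly
  close to a Lipschitz function, to which (5) transfers. Weak almost additivity gives (5) directly
  by cutting \<open>n\<close> into blocks of length \<open>k\<close> at every offset and averaging over the offsets.\<close>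

subsection \<open>Birkhoff sums\<close>

lemma funpow_apply_add: "(f ^^ m) ((f ^^ n) x) = (f ^^ (m + n)) x"
  by (simp add: funpow_add)

lemma birkhoff_sum_add:
  "birkhoff_sum \<phi> g (m + n) x = birkhoff_sum \<phi> g m x + birkhoff_sum \<phi> g n ((\<phi> ^^ m) x)"
  unfolding birkhoff_sum_def
proof (induction n)
  case (Suc n)
  have "(\<phi> ^^ (m + n)) x = (\<phi> ^^ n) ((\<phi> ^^ m) x)"
    by (simp add: funpow_apply_add add.commute)
  then show ?case using Suc by simp
qed simp

lemma birkhoff_sum_Suc_0 [simp]: "birkhoff_sum \<phi> g (Suc 0) x = g x"
  by (simp add: birkhoff_sum_def)

lemma birkhoff_sum_abs_le:
  assumes "\<And>y. \<bar>g y\<bar> \<le> B"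
  shows "\<bar>birkhoff_sum \<phi> g n x\<bar> \<le> real n * B"
proof -
  have "\<bar>birkhoff_sum \<phi> g n x\<bar> \<le> (\<Sum>k<n. \<bar>g ((\<phi> ^^ k) x)\<bar>)"
    unfolding birkhoff_sum_def by (rule sum_abs)
  also have "\<dots> \<le> (\<Sum>k<n. B)"
    by (intro sum_mono assms)
  finally show ?thesis by simp
qed

lemma birkhoff_sum_diff:
  "birkhoff_sum \<phi> f n x - birkhoff_sum \<phi> g n x = birkhoff_sum \<phi> (\<lambda>y. f y - g y) n x"
  by (simp add: birkhoff_sum_def sum_subtractf)

lemma birkhoff_sum_diff_abs_le:
  assumes "\<And>y. \<bar>f y - g y\<bar> \<le> c"
  shows "\<bar>birkhoff_sum \<phi> f n x - birkhoff_sum \<phi> g n x\<bar> \<le> real n * c"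
  unfolding birkhoff_sum_diff by (rule birkhoff_sum_abs_le) (rule assms)

lemma birkhoff_sum_divide: "birkhoff_sum \<phi> (\<lambda>y. g y / c) n x = birkhoff_sum \<phi> g n x / c"
  by (simp add: birkhoff_sum_def sum_divide_distrib)

lemma birkhoff_sum_shift_abs_le:
  assumes "\<And>y. \<bar>g y\<bar> \<le> B"
  shows "\<bar>birkhoff_sum \<phi> g n ((\<phi> ^^ j) x) - birkhoff_sum \<phi> g n x\<bar> \<le> 2 * real j * B"
proof -
  have "birkhoff_sum \<phi> g n ((\<phi> ^^ j) x) - birkhoff_sum \<phi> g n x
      = birkhoff_sum \<phi> g j ((\<phi> ^^ n) x) - birkhoff_sum \<phi> g j x"
    using birkhoff_sum_add[of \<phi> g j n x] birkhoff_sum_add[of \<phi> g n j x] by (simp add: add.commute)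
  moreover have bound: "\<bar>birkhoff_sum \<phi> g j y\<bar> \<le> real j * B" for y
    using assms by (rule birkhoff_sum_abs_le)
  ultimately show ?thesis
    using bound[of x] bound[of "(\<phi> ^^ n) x"] by linarith
qed

lemma birkhoff_sum_birkhoff_sum:
  "birkhoff_sum \<phi> (birkhoff_sum \<phi> g k) n x = (\<Sum>j<k. birkhoff_sum \<phi> g n ((\<phi> ^^ j) x))"
proof -
  have "(\<phi> ^^ j) ((\<phi> ^^ i) x) = (\<phi> ^^ i) ((\<phi> ^^ j) x)" for i j
    by (simp add: funpow_apply_add add.commute)
  then show ?thesis
    unfolding birkhoff_sum_def by (subst sum.swap) simp
qed

lemma birkhoff_sum_average_abs_le:
  assumes B: "\<And>y. \<bar>g y\<bar> \<le> B" and "k \<ge> 1"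
  shows "\<bar>birkhoff_sum \<phi> (\<lambda>y. birkhoff_sum \<phi> g k y / real k) n x - birkhoff_sum \<phi> g n x\<bar>
    \<le> 2 * real k * B"
proof -
  have "0 \<le> B"
    using B[of x] by linarith
  have "\<bar>\<Sum>j<k. birkhoff_sum \<phi> g n ((\<phi> ^^ j) x) - birkhoff_sum \<phi> g n x\<bar> \<le> (\<Sum>j<k. 2 * real k * B)"
  proof (rule order_trans[OF sum_abs sum_mono])
    fix j assume "j \<in> {..<k}"
    then have "2 * real j * B \<le> 2 * real k * B"
      using \<open>0 \<le> B\<close> by (simp add: mult_right_mono)
    then show "\<bar>birkhoff_sum \<phi> g n ((\<phi> ^^ j) x) - birkhoff_sum \<phi> g n x\<bar> \<le> 2 * real k * B"
      using birkhoff_sum_shift_abs_le[of g B \<phi> n j x, OF B] by linarith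
  qed
  moreover have "birkhoff_sum \<phi> (\<lambda>y. birkhoff_sum \<phi> g k y / real k) n x - birkhoff_sum \<phi> g n x
      = (\<Sum>j<k. birkhoff_sum \<phi> g n ((\<phi> ^^ j) x) - birkhoff_sum \<phi> g n x) / real k"
    using \<open>k \<ge> 1\<close>
    by (simp add: birkhoff_sum_divide birkhoff_sum_birkhoff_sum sum_subtractf diff_divide_distrib)
  ultimately show ?thesis
    using \<open>k \<ge> 1\<close> by (simp add: pos_divide_le_eq mult_ac)
qed

subsection \<open>Uniform approximation by Birkhoff sums\<close>

lemma bounded_range_iff_abs_le: "bounded (range f) \<longleftrightarrow> (\<exists>B. \<forall>x. \<bar>f x :: real\<bar> \<le> B)"
  by (simp add: bounded_iff)

lemma supnorm_le_iff:
  fixes f :: "'a \<Rightarrow> real"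
  assumes "bounded (range f)"
  shows "supnorm f \<le> c \<longleftrightarrow> (\<forall>x. \<bar>f x\<bar> \<le> c)"
proof -
  have "bdd_above (range (\<lambda>x. \<bar>f x\<bar>))"
    using assms by (auto simp: bounded_range_iff_abs_le bdd_above_def)
  then show ?thesis
    unfolding supnorm_def by (simp add: cSUP_le_iff)
qed

lemma supnorm_nonneg:
  fixes f :: "'a \<Rightarrow> real"
  assumes "bounded (range f)"
  shows "0 \<le> supnorm f"
  using supnorm_le_iff[OF assms, of "supnorm f"] by (meson abs_ge_zero order_refl order_trans)

lemma Limsup_tendsto_0_iff:
  fixes b :: "nat \<Rightarrow> nat \<Rightarrow> real"
  assumes nonneg: "\<And>k n. 0 \<le> b k n"
  shows "(\<lambda>k. limsup (\<lambda>n. ereal (b k n))) \<longlonglongrightarrow> 0 \<longleftrightarrow>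
    (\<forall>\<delta>>0. \<forall>\<^sub>F k in sequentially. \<forall>\<^sub>F n in sequentially. b k n \<le> \<delta>)"
proof
  assume lim: "(\<lambda>k. limsup (\<lambda>n. ereal (b k n))) \<longlonglongrightarrow> 0"
  show "\<forall>\<delta>>0. \<forall>\<^sub>F k in sequentially. \<forall>\<^sub>F n in sequentially. b k n \<le> \<delta>"
  proof (intro allI impI)
    fix \<delta> :: real assume "\<delta> > 0"
    then have "\<forall>\<^sub>F k in sequentially. limsup (\<lambda>n. ereal (b k n)) < ereal \<delta>"
      using order_tendstoD(2)[OF lim] by simp
    then show "\<forall>\<^sub>F k in sequentially. \<forall>\<^sub>F n in sequentially. b k n \<le> \<delta>"
    proof (rule eventually_mono)
      fix k assume "limsup (\<lambda>n. ereal (b k n)) < ereal \<delta>"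
      from Limsup_lessD[OF this] show "\<forall>\<^sub>F n in sequentially. b k n \<le> \<delta>"
        by (rule eventually_mono) simp
    qed
  qed
next
  assume H: "\<forall>\<delta>>0. \<forall>\<^sub>F k in sequentially. \<forall>\<^sub>F n in sequentially. b k n \<le> \<delta>"
  show "(\<lambda>k. limsup (\<lambda>n. ereal (b k n))) \<longlonglongrightarrow> 0"
  proof (rule order_tendstoI)
    fix a :: ereal assume "a < 0"
    have "0 \<le> limsup (\<lambda>n. ereal (b k n))" for k
      by (rule le_Limsup) (simp_all add: nonneg)
    with \<open>a < 0\<close> show "\<forall>\<^sub>F k in sequentially. a < limsup (\<lambda>n. ereal (b k n))"
      by (auto intro: always_eventually less_le_trans)
  next
    fix a :: ereal assume "0 < a"
    then obtain z where z: "0 < ereal z" "ereal z < a"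
      using ereal_dense2 by blast
    then have "\<forall>\<^sub>F k in sequentially. \<forall>\<^sub>F n in sequentially. b k n \<le> z / 2"
      using H[rule_format, of "z / 2"] by simp
    then show "\<forall>\<^sub>F k in sequentially. limsup (\<lambda>n. ereal (b k n)) < a"
    proof (rule eventually_mono)
      fix k assume "\<forall>\<^sub>F n in sequentially. b k n \<le> z / 2"
      then have "limsup (\<lambda>n. ereal (b k n)) \<le> ereal (z / 2)"
        by (intro Limsup_bounded) (simp add: eventually_mono)
      also have "\<dots> < a"
        using z by (simp add: less_le_trans[of _ "ereal z"])
      finally show "limsup (\<lambda>n. ereal (b k n)) < a" .
    qed
  qed
qed

definition uniformly_approximates ::
    "('a \<Rightarrow> 'a) \<Rightarrow> (nat \<Rightarrow> 'a \<Rightarrow> real) \<Rightarrow> (nat \<Rightarrow> 'a \<Rightarrow> real) \<Rightarrow> bool" where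
  "uniformly_approximates \<phi> G Gk \<longleftrightarrow> (\<forall>\<delta>>0. \<forall>\<^sub>F k in sequentially. \<forall>\<^sub>F n in sequentially.
      \<forall>x. \<bar>G n x - birkhoff_sum \<phi> (Gk k) n x\<bar> \<le> \<delta> * real n)"

lemma asymp_approx_iff_uniformly_approximates:
  assumes G: "\<forall>n\<ge>1. bounded (range (G n))" and Gk: "\<And>k. bounded (range (Gk k))"
  shows "asymp_approx \<phi> G Gk \<longleftrightarrow> uniformly_approximates \<phi> G Gk"
proof -
  define b where "b k n = supnorm (\<lambda>x. G n x - birkhoff_sum \<phi> (Gk k) n x) / real n" for k n
  have bounded: "bounded (range (\<lambda>x. G n x - birkhoff_sum \<phi> (Gk k) n x))" if n: "n \<ge> 1" for k n
  proof -
    obtain A where A: "\<forall>x. \<bar>G n x\<bar> \<le> A"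
      using G n by (auto simp: bounded_range_iff_abs_le)
    obtain B where B: "\<forall>x. \<bar>Gk k x\<bar> \<le> B"
      using Gk by (auto simp: bounded_range_iff_abs_le)
    have "\<bar>G n x - birkhoff_sum \<phi> (Gk k) n x\<bar> \<le> A + real n * B" for x
    proof -
      have "\<bar>birkhoff_sum \<phi> (Gk k) n x\<bar> \<le> real n * B"
        using B by (intro birkhoff_sum_abs_le) simp
      then show ?thesis
        using A[rule_format, of x] by linarith
    qed
    then show ?thesis
      unfolding bounded_range_iff_abs_le by blast
  qed
  have "0 \<le> b k n" for k n
    by (cases "n = 0") (simp_all add: b_def supnorm_nonneg[OF bounded])
  moreover have "(\<forall>\<^sub>F n in sequentially. b k n \<le> \<delta>) \<longleftrightarrow>
      (\<forall>\<^sub>F n in sequentially. \<forall>x. \<bar>G n x - birkhoff_sum \<phi> (Gk k) n x\<bar> \<le> \<delta> * real n)" for k \<delta>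
    using eventually_ge_at_top[of 1]
    by (rule eventually_cong) (simp add: b_def supnorm_le_iff[OF bounded] divide_le_eq mult.commute)
  ultimately show ?thesis
    unfolding asymp_approx_def uniformly_approximates_def b_def[symmetric]
    by (simp add: Limsup_tendsto_0_iff)
qed

lemma asymp_approx_birkhoff_sum:
  assumes "\<forall>n\<ge>1. G n = birkhoff_sum \<phi> g n"
  shows "asymp_approx \<phi> G (\<lambda>k. g)"
proof -
  have "\<forall>\<^sub>F n in sequentially. supnorm (\<lambda>x. G n x - birkhoff_sum \<phi> g n x) / real n = 0"
    using eventually_ge_at_top[of 1] by eventually_elim (simp add: assms supnorm_def)
  then have "limsup (\<lambda>n. ereal (supnorm (\<lambda>x. G n x - birkhoff_sum \<phi> g n x) / real n)) = limsup (\<lambda>n. 0)"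
    by (intro Limsup_eq) (simp add: eventually_mono zero_ereal_def)
  then show ?thesis
    by (simp add: asymp_approx_def Limsup_const)
qed

definition averaged :: "(nat \<Rightarrow> 'a \<Rightarrow> real) \<Rightarrow> nat \<Rightarrow> 'a \<Rightarrow> real" where
  "averaged G k = (\<lambda>x. G k x / real k)"

lemma birkhoff_sum_averaged:
  "birkhoff_sum \<phi> (averaged G k) n x = birkhoff_sum \<phi> (G k) n x / real k"
  by (simp add: averaged_def birkhoff_sum_divide)

lemma cond5_iff_asymp_approx_averaged: "cond5 \<phi> G \<longleftrightarrow> asymp_approx \<phi> G (averaged G)"
  unfolding cond5_def asymp_approx_def averaged_def birkhoff_sum_divide ..

lemma bounded_averaged:
  assumes "\<forall>n\<ge>1. bounded (range (G n))"
  shows "bounded (range (averaged G k))"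
proof (cases "k = 0")
  case False
  then obtain B where "\<forall>x. \<bar>G k x\<bar> \<le> B"
    using assms[rule_format, of k] by (auto simp: bounded_range_iff_abs_le)
  then have "\<forall>x. \<bar>averaged G k x\<bar> \<le> B / real k"
    by (simp add: averaged_def divide_right_mono)
  then show ?thesis
    unfolding bounded_range_iff_abs_le by blast
qed (simp add: averaged_def)

lemma continuous_on_averaged:
  assumes "\<forall>n\<ge>1. continuous_on UNIV (G n)"
  shows "continuous_on UNIV (averaged G k)"
  unfolding averaged_def
  by (cases "k = 0") (use assms in \<open>auto intro!: continuous_intros\<close>)

lemma uniformly_approximates_averaged:
  assumes approx: "uniformly_approximates \<phi> G Gk" and bounded: "\<And>k. bounded (range (Gk k))"
  shows "uniformly_approximates \<phi> G (averaged G)"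
  unfolding uniformly_approximates_def
proof (intro allI impI)
  fix \<delta> :: real assume "\<delta> > 0"
  then obtain K N where N: "\<And>n x. n \<ge> N \<Longrightarrow> \<bar>G n x - birkhoff_sum \<phi> (Gk K) n x\<bar> \<le> \<delta> / 4 * real n"
    using approx[unfolded uniformly_approximates_def, rule_format, of "\<delta> / 4"]
    unfolding eventually_sequentially by (meson order_refl zero_less_divide_iff zero_less_numeral)
  obtain B where B: "\<And>x. \<bar>Gk K x\<bar> \<le> B"
    using bounded[of K] by (auto simp: bounded_range_iff_abs_le)
  show "\<forall>\<^sub>F k in sequentially. \<forall>\<^sub>F n in sequentially.
      \<forall>x. \<bar>G n x - birkhoff_sum \<phi> (averaged G k) n x\<bar> \<le> \<delta> * real n"
  proof (rule eventually_sequentiallyI[of "max N 1"])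
    fix k assume k: "max N 1 \<le> k"
    have close: "\<bar>averaged G k y - birkhoff_sum \<phi> (Gk K) k y / real k\<bar> \<le> \<delta> / 4" for y
      using N[of k y] k by (simp add: averaged_def diff_divide_distrib[symmetric] divide_le_eq)
    obtain N' :: nat where N': "4 * real k * B / \<delta> \<le> real N'"
      using real_arch_simple by blast
    show "\<forall>\<^sub>F n in sequentially. \<forall>x. \<bar>G n x - birkhoff_sum \<phi> (averaged G k) n x\<bar> \<le> \<delta> * real n"
    proof (intro eventually_sequentiallyI[of "max N N'"] allI)
      fix n x assume n: "max N N' \<le> n"
      have "\<bar>birkhoff_sum \<phi> (averaged G k) n x
          - birkhoff_sum \<phi> (\<lambda>y. birkhoff_sum \<phi> (Gk K) k y / real k) n x\<bar> \<le> real n * (\<delta> / 4)"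
        using close by (rule birkhoff_sum_diff_abs_le)
      moreover have "\<bar>birkhoff_sum \<phi> (\<lambda>y. birkhoff_sum \<phi> (Gk K) k y / real k) n x
          - birkhoff_sum \<phi> (Gk K) n x\<bar> \<le> 2 * real k * B"
        using B k by (intro birkhoff_sum_average_abs_le) auto
      moreover have "4 * real k * B \<le> \<delta> * real n"
      proof -
        have "4 * real k * B \<le> \<delta> * real N'"
          using N' \<open>\<delta> > 0\<close> by (simp add: divide_le_eq mult.commute)
        also have "\<dots> \<le> \<delta> * real n"
          using n \<open>\<delta> > 0\<close> by simp
        finally show ?thesis .
      qed
      moreover have "\<bar>G n x - birkhoff_sum \<phi> (Gk K) n x\<bar> \<le> \<delta> / 4 * real n"
        using N n by simp
      moreover have "real n * (\<delta> / 4) = \<delta> * real n / 4" "\<delta> / 4 * real n = \<delta> * real n / 4"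
        by simp_all
      ultimately show "\<bar>G n x - birkhoff_sum \<phi> (averaged G k) n x\<bar> \<le> \<delta> * real n"
        by linarith
    qed
  qed
qed

subsection \<open>Tempered variation\<close>

definition bowen_variation_le :: "('a::metric_space \<Rightarrow> 'a) \<Rightarrow> (nat \<Rightarrow> 'a \<Rightarrow> real) \<Rightarrow> real \<Rightarrow> bool" where
  "bowen_variation_le \<phi> F \<delta> \<longleftrightarrow> (\<exists>\<epsilon>>0. \<forall>\<^sub>F n in sequentially. \<forall>x. \<forall>y\<in>bowen_ball \<phi> n x \<epsilon>.
      \<forall>z\<in>bowen_ball \<phi> n x \<epsilon>. \<bar>F n y - F n z\<bar> \<le> \<delta> * real n)"

lemma bowen_ball_center: "\<epsilon> > 0 \<Longrightarrow> x \<in> bowen_ball \<phi> n x \<epsilon>"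
  by (simp add: bowen_ball_def)

lemma bowen_ball_mono: "\<epsilon> \<le> \<epsilon>' \<Longrightarrow> bowen_ball \<phi> n x \<epsilon> \<subseteq> bowen_ball \<phi> n x \<epsilon>'"
  unfolding bowen_ball_def by fastforce

lemma var_n_le_iff:
  assumes "n \<ge> 1"
  shows "var_n \<phi> F n \<epsilon> \<le> ereal c \<longleftrightarrow>
    (\<forall>x. \<forall>y\<in>bowen_ball \<phi> n x \<epsilon>. \<forall>z\<in>bowen_ball \<phi> n x \<epsilon>. \<bar>F n y - F n z\<bar> \<le> c * real n)"
  using assms by (simp add: var_n_def SUP_le_iff divide_le_eq)

lemma var_n_nonneg: "\<epsilon> > 0 \<Longrightarrow> 0 \<le> var_n \<phi> F n \<epsilon>"
  unfolding var_n_def zero_ereal_def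
  by (rule SUP_upper2[of x], simp, rule SUP_upper2[OF bowen_ball_center], assumption,
      rule SUP_upper2[OF bowen_ball_center]) simp_all

lemma bowen_variation_le_iff:
  "bowen_variation_le \<phi> F \<delta> \<longleftrightarrow> (\<exists>\<epsilon>>0. \<forall>\<^sub>F n in sequentially. var_n \<phi> F n \<epsilon> \<le> ereal \<delta>)"
  unfolding bowen_variation_le_def
  by (intro ex_cong1 conj_cong refl eventually_cong[OF eventually_ge_at_top[of 1]])
    (simp add: var_n_le_iff)

lemma bowen_variation_le_of_tendsto:
  assumes "((\<lambda>\<epsilon>. limsup (\<lambda>n. var_n \<phi> F n \<epsilon>)) \<longlongrightarrow> l) (at_right 0)" and "l < ereal \<delta>"
  shows "bowen_variation_le \<phi> F \<delta>"
proof -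
  obtain b :: real where "b > 0" and b: "\<And>\<epsilon>. 0 < \<epsilon> \<Longrightarrow> \<epsilon> < b \<Longrightarrow> limsup (\<lambda>n. var_n \<phi> F n \<epsilon>) < ereal \<delta>"
    using order_tendstoD(2)[OF assms] unfolding eventually_at_right_field by blast
  then have "\<forall>\<^sub>F n in sequentially. var_n \<phi> F n (b / 2) < ereal \<delta>"
    by (intro Limsup_lessD) simp
  then show ?thesis
    unfolding bowen_variation_le_iff using \<open>b > 0\<close>
    by (intro exI[of _ "b / 2"]) (auto elim: eventually_mono)
qed

lemma var_n_mono: "\<epsilon> \<le> \<epsilon>' \<Longrightarrow> var_n \<phi> F n \<epsilon> \<le> var_n \<phi> F n \<epsilon>'"
  unfolding var_n_def by (intro SUP_mono' SUP_subset_mono bowen_ball_mono order_refl)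

lemma limsup_var_n_le_of_bowen_variation_le:
  assumes "bowen_variation_le \<phi> F \<delta>"
  shows "\<forall>\<^sub>F \<epsilon> in at_right 0. limsup (\<lambda>n. var_n \<phi> F n \<epsilon>) \<le> ereal \<delta>"
proof -
  obtain \<epsilon>\<^sub>0 where "\<epsilon>\<^sub>0 > 0" and ev: "\<forall>\<^sub>F n in sequentially. var_n \<phi> F n \<epsilon>\<^sub>0 \<le> ereal \<delta>"
    using assms by (auto simp: bowen_variation_le_iff)
  have "limsup (\<lambda>n. var_n \<phi> F n \<epsilon>) \<le> ereal \<delta>" if "\<epsilon> \<le> \<epsilon>\<^sub>0" for \<epsilon>
    using ev by (intro Limsup_bounded) (auto elim: eventually_mono intro: order_trans[OF var_n_mono[OF that]])
  then show ?thesis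
    unfolding eventually_at_right_field using \<open>\<epsilon>\<^sub>0 > 0\<close> by (auto intro: exI[of _ \<epsilon>\<^sub>0])
qed

lemma tempered_variation_iff: "tempered_variation \<phi> F \<longleftrightarrow> (\<forall>\<delta>>0. bowen_variation_le \<phi> F \<delta>)"
proof
  assume "tempered_variation \<phi> F"
  then show "\<forall>\<delta>>0. bowen_variation_le \<phi> F \<delta>"
    unfolding tempered_variation_def by (auto intro: bowen_variation_le_of_tendsto)
next
  assume small: "\<forall>\<delta>>0. bowen_variation_le \<phi> F \<delta>"
  show "tempered_variation \<phi> F"
    unfolding tempered_variation_def
  proof (rule order_tendstoI)
    fix a :: ereal assume "a < 0"
    have "0 \<le> limsup (\<lambda>n. var_n \<phi> F n \<epsilon>)" if "\<epsilon> > 0" for \<epsilon>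
      by (rule le_Limsup) (simp_all add: var_n_nonneg that)
    then show "\<forall>\<^sub>F \<epsilon> in at_right 0. a < limsup (\<lambda>n. var_n \<phi> F n \<epsilon>)"
      unfolding eventually_at_right_field using \<open>a < 0\<close>
      by (intro exI[of _ 1]) (auto intro: less_le_trans)
  next
    fix a :: ereal assume "0 < a"
    then obtain z where "0 < z" and "ereal z < a"
      using ereal_dense2 by (metis ereal_less(2))
    then have "\<forall>\<^sub>F \<epsilon> in at_right 0. limsup (\<lambda>n. var_n \<phi> F n \<epsilon>) \<le> ereal z"
      using small by (simp add: limsup_var_n_le_of_bowen_variation_le)
    then show "\<forall>\<^sub>F \<epsilon> in at_right 0. limsup (\<lambda>n. var_n \<phi> F n \<epsilon>) < a"
      by (rule eventually_mono) (use \<open>ereal z < a\<close> in auto)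
  qed
qed

lemma bowen_variation_le_birkhoff_sum:
  fixes g :: "'a::metric_space \<Rightarrow> real"
  assumes "compact (UNIV :: 'a set)" and "continuous_on UNIV g" and "\<delta> > 0"
  shows "bowen_variation_le \<phi> (\<lambda>n. birkhoff_sum \<phi> g n) \<delta>"
proof -
  obtain d where "d > 0" and d: "\<And>x x'. dist x' x < d \<Longrightarrow> dist (g x') (g x) < \<delta>"
    using compact_uniformly_continuous[OF assms(2,1)] \<open>\<delta> > 0\<close>
    unfolding uniformly_continuous_on_def by blast
  have "\<bar>birkhoff_sum \<phi> g n y - birkhoff_sum \<phi> g n z\<bar> \<le> \<delta> * real n"
    if y: "y \<in> bowen_ball \<phi> n x (d / 2)" and z: "z \<in> bowen_ball \<phi> n x (d / 2)" for n x y z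
  proof -
    have "\<bar>g ((\<phi> ^^ j) y) - g ((\<phi> ^^ j) z)\<bar> \<le> \<delta>" if "j < n" for j
    proof -
      have "dist ((\<phi> ^^ j) y) ((\<phi> ^^ j) z) < d"
        using that y z dist_triangle_half_l[of "(\<phi> ^^ j) y" "(\<phi> ^^ j) x" d "(\<phi> ^^ j) z"]
        by (auto simp: bowen_ball_def dist_commute)
      then show ?thesis
        using d by (fastforce simp: dist_real_def)
    qed
    then have "\<bar>birkhoff_sum \<phi> g n y - birkhoff_sum \<phi> g n z\<bar> \<le> (\<Sum>j<n. \<delta>)"
      unfolding birkhoff_sum_def sum_subtractf[symmetric]
      by (intro order_trans[OF sum_abs sum_mono]) simp
    then show ?thesis
      by (simp add: mult.commute)
  qed
  then show ?thesis
    unfolding bowen_variation_le_def using \<open>d > 0\<close>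
    by (intro exI[of _ "d / 2"]) (auto intro: always_eventually)
qed

lemma tempered_variation_birkhoff_sum:
  fixes g :: "'a::metric_space \<Rightarrow> real"
  assumes "compact (UNIV :: 'a set)" and "continuous_on UNIV g"
  shows "tempered_variation \<phi> (\<lambda>n. birkhoff_sum \<phi> g n)"
  using assms by (simp add: tempered_variation_iff bowen_variation_le_birkhoff_sum)

lemma bowen_variation_le_approx:
  assumes "bowen_variation_le \<phi> H \<delta>"
    and "\<forall>\<^sub>F n in sequentially. \<forall>x. \<bar>G n x - H n x\<bar> \<le> \<eta> * real n"
  shows "bowen_variation_le \<phi> G (\<delta> + 2 * \<eta>)"
proof -
  obtain \<epsilon> where "\<epsilon> > 0" and H: "\<forall>\<^sub>F n in sequentially. \<forall>x. \<forall>y\<in>bowen_ball \<phi> n x \<epsilon>.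
      \<forall>z\<in>bowen_ball \<phi> n x \<epsilon>. \<bar>H n y - H n z\<bar> \<le> \<delta> * real n"
    using assms(1) unfolding bowen_variation_le_def by blast
  have "\<forall>\<^sub>F n in sequentially. \<forall>x. \<forall>y\<in>bowen_ball \<phi> n x \<epsilon>.
      \<forall>z\<in>bowen_ball \<phi> n x \<epsilon>. \<bar>G n y - G n z\<bar> \<le> (\<delta> + 2 * \<eta>) * real n"
    using H assms(2)
  proof eventually_elim
    case (elim n)
    show ?case
    proof (intro allI ballI)
      fix x y z assume "y \<in> bowen_ball \<phi> n x \<epsilon>" "z \<in> bowen_ball \<phi> n x \<epsilon>"
      then have "\<bar>H n y - H n z\<bar> \<le> \<delta> * real n"
        using elim(1) by blast
      moreover have "\<bar>G n y - H n y\<bar> \<le> \<eta> * real n" "\<bar>G n z - H n z\<bar> \<le> \<eta> * real n"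
        using elim(2) by auto
      ultimately show "\<bar>G n y - G n z\<bar> \<le> (\<delta> + 2 * \<eta>) * real n"
        by (simp add: algebra_simps)
    qed
  qed
  then show ?thesis
    unfolding bowen_variation_le_def using \<open>\<epsilon> > 0\<close> by blast
qed

lemma tempered_variation_of_approximants:
  assumes approx: "uniformly_approximates \<phi> G Gk"
    and var: "\<And>k. ((\<lambda>\<epsilon>. limsup (\<lambda>n. var_n \<phi> (\<lambda>m. birkhoff_sum \<phi> (Gk k) m) n \<epsilon>)) \<longlongrightarrow> L k) (at_right 0)"
    and "L \<longlonglongrightarrow> 0"
  shows "tempered_variation \<phi> G"
  unfolding tempered_variation_iff
proof (intro allI impI)
  fix \<delta> :: real assume "\<delta> > 0"
  then have "\<delta> / 3 > 0"
    by simp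
  then have "\<forall>\<^sub>F k in sequentially. L k < ereal (\<delta> / 3)"
    using order_tendstoD(2)[OF \<open>L \<longlonglongrightarrow> 0\<close>] by simp
  moreover have "\<forall>\<^sub>F k in sequentially. \<forall>\<^sub>F n in sequentially.
      \<forall>x. \<bar>G n x - birkhoff_sum \<phi> (Gk k) n x\<bar> \<le> \<delta> / 3 * real n"
    using approx[unfolded uniformly_approximates_def, rule_format, OF \<open>\<delta> / 3 > 0\<close>] .
  ultimately obtain k where "L k < ereal (\<delta> / 3)" and close: "\<forall>\<^sub>F n in sequentially.
      \<forall>x. \<bar>G n x - birkhoff_sum \<phi> (Gk k) n x\<bar> \<le> \<delta> / 3 * real n"
    using eventually_happens'[OF sequentially_bot eventually_conj] by blast
  have "bowen_variation_le \<phi> (\<lambda>m. birkhoff_sum \<phi> (Gk k) m) (\<delta> / 3)"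
    using var \<open>L k < ereal (\<delta> / 3)\<close> by (rule bowen_variation_le_of_tendsto)
  from bowen_variation_le_approx[OF this close] show "bowen_variation_le \<phi> G \<delta>"
    by simp
qed

lemma tempered_variation_of_continuous_approximants:
  fixes \<phi> :: "'a::metric_space \<Rightarrow> 'a"
  assumes "compact (UNIV :: 'a set)" and "uniformly_approximates \<phi> G Gk"
    and "\<And>k. continuous_on UNIV (Gk k)"
  shows "tempered_variation \<phi> G"
proof (rule tempered_variation_of_approximants[OF assms(2), where L = "\<lambda>k. 0"])
  show "((\<lambda>\<epsilon>. limsup (\<lambda>n. var_n \<phi> (\<lambda>m. birkhoff_sum \<phi> (Gk k) m) n \<epsilon>)) \<longlongrightarrow> 0) (at_right 0)" for k
    using tempered_variation_birkhoff_sum[OF assms(1,3)] by (simp add: tempered_variation_def)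
qed simp

subsection \<open>Continuous approximants\<close>

lemma continuous_on_funpow:
  fixes f :: "'a::topological_space \<Rightarrow> 'a"
  assumes "continuous_on UNIV f"
  shows "continuous_on UNIV (f ^^ n)"
proof (induction n)
  case (Suc n)
  have "continuous_on UNIV (\<lambda>x. f ((f ^^ n) x))"
    by (rule continuous_on_compose2[OF assms Suc.IH]) simp
  then show ?case
    by (simp add: comp_def)
qed (simp add: continuous_on_id)

lemma ball_subset_bowen_ball:
  fixes \<phi> :: "'a::metric_space \<Rightarrow> 'a"
  assumes "compact (UNIV :: 'a set)" and "continuous_on UNIV \<phi>" and "\<epsilon> > 0"
  shows "\<exists>r>0. \<forall>x. ball x r \<subseteq> bowen_ball \<phi> n x \<epsilon>"
proof (induction n)
  case 0
  show ?case
    by (auto simp: bowen_ball_def intro: exI[of _ 1])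
next
  case (Suc n)
  then obtain r where "r > 0" and r: "\<forall>x. ball x r \<subseteq> bowen_ball \<phi> n x \<epsilon>"
    by blast
  obtain d where "d > 0" and d: "\<And>x y. dist y x < d \<Longrightarrow> dist ((\<phi> ^^ n) y) ((\<phi> ^^ n) x) < \<epsilon>"
    using compact_uniformly_continuous[OF continuous_on_funpow[OF assms(2)] assms(1)] \<open>\<epsilon> > 0\<close>
    unfolding uniformly_continuous_on_def by blast
  have "ball x (min r d) \<subseteq> bowen_ball \<phi> (Suc n) x \<epsilon>" for x
    using r d by (fastforce simp: bowen_ball_def less_Suc_eq dist_commute subset_iff)
  then show ?case
    using \<open>r > 0\<close> \<open>d > 0\<close> by (intro exI[of _ "min r d"]) auto
qed

lemma bdd_below_inf_convolution:
  fixes f :: "'a::metric_space \<Rightarrow> real"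
  assumes "\<And>y. B \<le> f y" and "0 \<le> L"
  shows "bdd_below (range (\<lambda>y. f y + L * dist x y))"
  using assms by (intro bdd_belowI2[of _ B]) (simp add: add_increasing2)

lemma inf_convolution_le:
  fixes f :: "'a::metric_space \<Rightarrow> real"
  assumes "\<And>y. B \<le> f y" and "0 \<le> L"
  shows "(INF y. f y + L * dist x y) \<le> f x"
  using bdd_below_inf_convolution[OF assms] by (rule cINF_lower2[of _ _ x]) simp_all

lemma lipschitz_on_inf_convolution:
  fixes f :: "'a::metric_space \<Rightarrow> real"
  assumes "\<And>y. B \<le> f y" and "0 \<le> L"
  shows "lipschitz_on L UNIV (\<lambda>x. INF y. f y + L * dist x y)"
proof -
  define g where "g x = (INF y. f y + L * dist x y)" for x
  have g_le: "g x \<le> f y + L * dist x y" for x y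
    unfolding g_def using bdd_below_inf_convolution[OF assms] by (rule cINF_lower) simp
  have lip: "g x \<le> g x' + L * dist x x'" for x x'
  proof -
    have "g x - L * dist x x' \<le> g x'"
      unfolding g_def[of x']
    proof (rule cINF_greatest)
      fix y
      have "L * dist x y \<le> L * dist x x' + L * dist x' y"
        using dist_triangle[of x y x'] \<open>0 \<le> L\<close> by (simp add: distrib_left[symmetric] mult_left_mono)
      then show "g x - L * dist x x' \<le> f y + L * dist x' y"
        using g_le[of x y] by linarith
    qed simp
    then show ?thesis
      by linarith
  qed
  have "dist (g x) (g x') \<le> L * dist x x'" for x x'
    using lip[of x x'] lip[of x' x] by (simp add: dist_real_def dist_commute abs_le_iff)
  then show ?thesis
    using \<open>0 \<le> L\<close> by (simp add: lipschitz_on_def g_def)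
qed

text \<open>The inf-convolution \<open>g x = inf\<^sub>y (f y + L d(x,y))\<close> is above \<open>f - \<eta>\<close> because outside the
  \<open>r\<close>-ball around \<open>x\<close> the penalty \<open>L r\<close> exceeds the oscillation \<open>2B\<close> of \<open>f\<close>.\<close>

lemma continuous_approximation:
  fixes f :: "'a::metric_space \<Rightarrow> real"
  assumes B: "\<And>x. \<bar>f x\<bar> \<le> B" and "r > 0" and osc: "\<And>x y. dist x y < r \<Longrightarrow> \<bar>f x - f y\<bar> \<le> \<eta>"
  shows "\<exists>g. continuous_on UNIV g \<and> (\<forall>x. \<bar>g x - f x\<bar> \<le> \<eta>)"
proof -
  define L where "L = (2 * B + 1) / r"
  define g where "g x = (INF y. f y + L * dist x y)" for x
  have "0 \<le> B" "0 \<le> \<eta>"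
    using B[of undefined] osc[of undefined undefined] \<open>r > 0\<close> by auto
  then have "L > 0" and Lr: "L * r = 2 * B + 1"
    using \<open>r > 0\<close> by (simp_all add: L_def)
  have below: "- B \<le> f y" for y
    using B[of y] by linarith
  have lower: "f x - \<eta> \<le> g x" for x
    unfolding g_def
  proof (rule cINF_greatest)
    fix y
    show "f x - \<eta> \<le> f y + L * dist x y"
    proof (cases "dist x y < r")
      case True
      have "0 \<le> L * dist x y"
        using \<open>L > 0\<close> by simp
      then show ?thesis
        using osc[OF True] by linarith
    next
      case False
      then have "2 * B + 1 \<le> L * dist x y"
        using \<open>L > 0\<close> Lr by (metis mult_left_mono less_imp_le not_less)
      then show ?thesis
        using B[of x] B[of y] \<open>0 \<le> \<eta>\<close> by linarith
    qed
  qed simp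
  have upper: "g x \<le> f x" for x
    unfolding g_def using below \<open>L > 0\<close> by (intro inf_convolution_le) auto
  have "\<bar>g x - f x\<bar> \<le> \<eta>" for x
    using lower[of x] upper[of x] by linarith
  moreover have "continuous_on UNIV g"
    unfolding g_def using below \<open>L > 0\<close>
    by (intro lipschitz_on_continuous_on[OF lipschitz_on_inf_convolution[of "- B"]]) auto
  ultimately show ?thesis
    by blast
qed

lemma continuous_approximation_bowen:
  fixes \<phi> :: "'a::metric_space \<Rightarrow> 'a" and f :: "'a \<Rightarrow> real"
  assumes "compact (UNIV :: 'a set)" and "continuous_on UNIV \<phi>" and "\<epsilon> > 0"
    and "bounded (range f)" and osc: "\<And>x y. y \<in> bowen_ball \<phi> k x \<epsilon> \<Longrightarrow> \<bar>f y - f x\<bar> \<le> \<eta>"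
  shows "\<exists>g. continuous_on UNIV g \<and> (\<forall>x. \<bar>g x - f x\<bar> \<le> \<eta>)"
proof -
  obtain r where "r > 0" and r: "\<forall>x. ball x r \<subseteq> bowen_ball \<phi> k x \<epsilon>"
    using ball_subset_bowen_ball[OF assms(1-3)] by blast
  obtain B where "\<forall>x. \<bar>f x\<bar> \<le> B"
    using \<open>bounded (range f)\<close> by (auto simp: bounded_range_iff_abs_le)
  moreover have "\<bar>f x - f y\<bar> \<le> \<eta>" if "dist x y < r" for x y
  proof -
    have "y \<in> bowen_ball \<phi> k x \<epsilon>"
      using r[rule_format, of x] that by auto
    then show ?thesis
      using osc[of y x] by (simp add: abs_minus_commute)
  qed
  ultimately show ?thesis
    using continuous_approximation[of f B r \<eta>] \<open>r > 0\<close> by blast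
qed

lemma continuous_approximant:
  fixes \<phi> :: "'a::metric_space \<Rightarrow> 'a"
  assumes compact: "compact (UNIV :: 'a set)" and cont: "continuous_on UNIV \<phi>"
    and bounded: "\<forall>n\<ge>1. bounded (range (G n))" and tv: "tempered_variation \<phi> G"
    and avg: "uniformly_approximates \<phi> G (averaged G)" and "\<delta> > 0"
  shows "\<exists>g. continuous_on UNIV g \<and>
    (\<forall>\<^sub>F n in sequentially. \<forall>x. \<bar>G n x - birkhoff_sum \<phi> g n x\<bar> \<le> \<delta> * real n)"
proof -
  have "\<delta> / 3 > 0"
    using \<open>\<delta> > 0\<close> by simp
  obtain \<epsilon> where "\<epsilon> > 0" and osc: "\<forall>\<^sub>F k in sequentially. \<forall>x. \<forall>y\<in>bowen_ball \<phi> k x \<epsilon>.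
      \<forall>z\<in>bowen_ball \<phi> k x \<epsilon>. \<bar>G k y - G k z\<bar> \<le> \<delta> / 3 * real k"
    using tv \<open>\<delta> / 3 > 0\<close> unfolding tempered_variation_iff bowen_variation_le_def by blast
  obtain k where "k \<ge> 1"
    and osc_k: "\<forall>x. \<forall>y\<in>bowen_ball \<phi> k x \<epsilon>. \<forall>z\<in>bowen_ball \<phi> k x \<epsilon>. \<bar>G k y - G k z\<bar> \<le> \<delta> / 3 * real k"
    and close: "\<forall>\<^sub>F n in sequentially. \<forall>x.
      \<bar>G n x - birkhoff_sum \<phi> (averaged G k) n x\<bar> \<le> \<delta> / 3 * real n"
    using eventually_happens'[OF sequentially_bot eventually_conj[OF eventually_ge_at_top[of 1]
        eventually_conj[OF osc avg[unfolded uniformly_approximates_def, rule_format, OF \<open>\<delta> / 3 > 0\<close>]]]]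
    by blast
  have "\<bar>averaged G k y - averaged G k x\<bar> \<le> \<delta> / 3" if "y \<in> bowen_ball \<phi> k x \<epsilon>" for x y
  proof -
    have "\<bar>G k y - G k x\<bar> \<le> \<delta> / 3 * real k"
      using osc_k bowen_ball_center[OF \<open>\<epsilon> > 0\<close>] that by blast
    then show ?thesis
      using \<open>k \<ge> 1\<close> by (simp add: averaged_def diff_divide_distrib[symmetric] divide_le_eq)
  qed
  then obtain g where "continuous_on UNIV g" and g: "\<forall>x. \<bar>g x - averaged G k x\<bar> \<le> \<delta> / 3"
    using continuous_approximation_bowen[OF compact cont \<open>\<epsilon> > 0\<close> bounded_averaged[OF bounded]] by blast
  have "\<forall>\<^sub>F n in sequentially. \<forall>x. \<bar>G n x - birkhoff_sum \<phi> g n x\<bar> \<le> \<delta> * real n"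
    using close
  proof (rule eventually_mono, intro allI)
    fix n x
    assume "\<forall>x. \<bar>G n x - birkhoff_sum \<phi> (averaged G k) n x\<bar> \<le> \<delta> / 3 * real n"
    then have "\<bar>G n x - birkhoff_sum \<phi> (averaged G k) n x\<bar> \<le> \<delta> / 3 * real n" ..
    moreover have "\<bar>birkhoff_sum \<phi> (averaged G k) n x - birkhoff_sum \<phi> g n x\<bar> \<le> real n * (\<delta> / 3)"
      using g by (intro birkhoff_sum_diff_abs_le) (simp add: abs_minus_commute)
    moreover have "0 \<le> \<delta> * real n" "real n * (\<delta> / 3) = \<delta> * real n / 3" "\<delta> / 3 * real n = \<delta> * real n / 3"
      using \<open>\<delta> > 0\<close> by simp_all
    ultimately show "\<bar>G n x - birkhoff_sum \<phi> g n x\<bar> \<le> \<delta> * real n"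
      by linarith
  qed
  with \<open>continuous_on UNIV g\<close> show ?thesis
    by blast
qed

lemma uniformly_approximates_choice:
  assumes "\<And>\<delta>. \<delta> > 0 \<Longrightarrow>
    \<exists>g. P g \<and> (\<forall>\<^sub>F n in sequentially. \<forall>x. \<bar>G n x - birkhoff_sum \<phi> g n x\<bar> \<le> \<delta> * real n)"
  shows "\<exists>Gk. (\<forall>k. P (Gk k)) \<and> uniformly_approximates \<phi> G Gk"
proof -
  have "\<forall>k. \<exists>g. P g \<and> (\<forall>\<^sub>F n in sequentially.
      \<forall>x. \<bar>G n x - birkhoff_sum \<phi> g n x\<bar> \<le> inverse (real (Suc k)) * real n)"
    using assms by simp
  then obtain Gk where Gk: "\<forall>k. P (Gk k) \<and> (\<forall>\<^sub>F n in sequentially.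
      \<forall>x. \<bar>G n x - birkhoff_sum \<phi> (Gk k) n x\<bar> \<le> inverse (real (Suc k)) * real n)"
    by (auto dest: choice)
  then have P: "\<forall>k. P (Gk k)" and close: "\<forall>k. \<forall>\<^sub>F n in sequentially.
      \<forall>x. \<bar>G n x - birkhoff_sum \<phi> (Gk k) n x\<bar> \<le> inverse (real (Suc k)) * real n"
    by auto
  have "uniformly_approximates \<phi> G Gk"
    unfolding uniformly_approximates_def
  proof (intro allI impI)
    fix \<delta> :: real assume "\<delta> > 0"
    then obtain J where J: "inverse (real (Suc J)) < \<delta>"
      using reals_Archimedean by blast
    show "\<forall>\<^sub>F k in sequentially. \<forall>\<^sub>F n in sequentially.
        \<forall>x. \<bar>G n x - birkhoff_sum \<phi> (Gk k) n x\<bar> \<le> \<delta> * real n"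
    proof (rule eventually_sequentiallyI[of J])
      fix k assume "J \<le> k"
      then have "inverse (real (Suc k)) \<le> inverse (real (Suc J))"
        by (intro le_imp_inverse_le) simp_all
      with J have "inverse (real (Suc k)) \<le> \<delta>"
        by linarith
      then have mono: "inverse (real (Suc k)) * real n \<le> \<delta> * real n" for n
        by (simp add: mult_right_mono)
      show "\<forall>\<^sub>F n in sequentially. \<forall>x. \<bar>G n x - birkhoff_sum \<phi> (Gk k) n x\<bar> \<le> \<delta> * real n"
        using close[rule_format, of k] by (rule eventually_mono) (meson mono order_trans)
    qed
  qed
  with P show ?thesis
    by blast
qed

subsection \<open>Weak almost additivity\<close>

definition additivity_defect_le :: "('a \<Rightarrow> 'a) \<Rightarrow> (nat \<Rightarrow> 'a \<Rightarrow> real) \<Rightarrow> (nat \<Rightarrow> real) \<Rightarrow> bool" where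
  "additivity_defect_le \<phi> G C \<longleftrightarrow>
    (\<forall>m\<ge>1. \<forall>n\<ge>1. \<forall>x. \<bar>G (m + n) x - G m x - G n ((\<phi> ^^ m) x)\<bar> \<le> C m)"

lemma weakly_almost_additive_iff:
  "weakly_almost_additive \<phi> G \<longleftrightarrow> (\<exists>C. (\<lambda>n. C n / real n) \<longlonglongrightarrow> 0 \<and> additivity_defect_le \<phi> G C)"
  unfolding weakly_almost_additive_def additivity_defect_le_def abs_le_iff
  by (intro ex_cong1 conj_cong[OF refl] all_cong1 imp_cong[OF refl]) auto

lemma additivity_defect_blocks:
  assumes W: "additivity_defect_le \<phi> G C" and "k \<ge> 1" "r \<ge> 1"
  shows "\<bar>G (q * k + r) y - (\<Sum>j<q. G k ((\<phi> ^^ (j * k)) y)) - G r ((\<phi> ^^ (q * k)) y)\<bar>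
    \<le> real q * C k"
proof (induction q arbitrary: y)
  case (Suc q)
  have "\<bar>G (k + (q * k + r)) y - G k y - G (q * k + r) ((\<phi> ^^ k) y)\<bar> \<le> C k"
    using W \<open>k \<ge> 1\<close> \<open>r \<ge> 1\<close> unfolding additivity_defect_le_def by simp
  moreover have "(\<Sum>j<Suc q. G k ((\<phi> ^^ (j * k)) y)) = G k y + (\<Sum>j<q. G k ((\<phi> ^^ (j * k)) ((\<phi> ^^ k) y)))"
    by (subst sum.lessThan_Suc_shift) (simp add: funpow_apply_add add.commute)
  moreover have "(\<phi> ^^ (q * k)) ((\<phi> ^^ k) y) = (\<phi> ^^ (Suc q * k)) y"
    by (simp add: funpow_apply_add add.commute)
  ultimately show ?case
    using Suc.IH[of "(\<phi> ^^ k) y"] by (simp add: algebra_simps)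
qed simp

lemma additivity_defect_split:
  assumes W: "additivity_defect_le \<phi> G C" and "k \<ge> 1" "m \<ge> 1" "r \<ge> 1"
  shows "\<bar>G (m + (q * k + r)) x - G m x - (\<Sum>j<q. G k ((\<phi> ^^ (j * k + m)) x))
    - G r ((\<phi> ^^ (q * k + m)) x)\<bar> \<le> C m + real q * C k"
proof -
  have "\<bar>G (m + (q * k + r)) x - G m x - G (q * k + r) ((\<phi> ^^ m) x)\<bar> \<le> C m"
    using W \<open>m \<ge> 1\<close> \<open>r \<ge> 1\<close> unfolding additivity_defect_le_def by simp
  moreover have "\<bar>G (q * k + r) ((\<phi> ^^ m) x) - (\<Sum>j<q. G k ((\<phi> ^^ (j * k + m)) x))
      - G r ((\<phi> ^^ (q * k + m)) x)\<bar> \<le> real q * C k"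
    using additivity_defect_blocks[OF W \<open>k \<ge> 1\<close> \<open>r \<ge> 1\<close>, of q "(\<phi> ^^ m) x"]
    by (simp add: funpow_apply_add)
  ultimately show ?thesis
    by linarith
qed

lemma sum_blocks:
  fixes k q :: nat and h :: "nat \<Rightarrow> 'a::comm_monoid_add"
  shows "(\<Sum>i<k. \<Sum>j<q. h (j * k + i)) = (\<Sum>m<q * k. h m)"
proof -
  have "(\<Sum>j<q. \<Sum>i<k. h (j * k + i)) = (\<Sum>j<q. \<Sum>m\<in>{j * k..<j * k + k}. h m)"
    using sum.shift_bounds_nat_ivl[of h 0 "j * k" k for j] by (simp add: add.commute atLeast0LessThan)
  then show ?thesis
    by (subst sum.swap) (simp add: sum.nat_group)
qed

lemma abs_diff_average_le:
  fixes a :: real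
  assumes "k \<ge> 1" and "\<And>i. i < k \<Longrightarrow> \<bar>a - b i\<bar> \<le> c"
  shows "\<bar>a - (\<Sum>i<k. b i) / real k\<bar> \<le> c"
proof -
  have "\<bar>real k * a - (\<Sum>i<k. b i)\<bar> \<le> (\<Sum>i<k. \<bar>a - b i\<bar>)"
    using sum_abs[of "\<lambda>i. a - b i" "{..<k}"] by (simp add: sum_subtractf)
  also have "\<dots> \<le> real k * c"
    using sum_mono[of "{..<k}" "\<lambda>i. \<bar>a - b i\<bar>" "\<lambda>i. c"] assms(2) by simp
  finally show ?thesis
    using \<open>k \<ge> 1\<close> by (simp add: abs_divide field_simps)
qed

lemma div_minus_two_mult_bounds:
  fixes k n :: nat
  assumes "k \<ge> 1" and "3 * k \<le> n"
  shows "(n div k - 2) * k + 2 * k \<le> n" and "n < (n div k - 2) * k + 3 * k"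
proof -
  have "n div k * k \<le> n" "n < n div k * k + k"
    using div_mult_mod_eq[of n k] mod_less_divisor[of k n] \<open>k \<ge> 1\<close> by linarith+
  moreover have "3 \<le> n div k"
    using assms by (metis div_le_mono nonzero_mult_div_cancel_right not_one_le_zero)
  ultimately show "(n div k - 2) * k + 2 * k \<le> n" "n < (n div k - 2) * k + 3 * k"
    by (simp_all add: diff_mult_distrib)
qed

lemma birkhoff_sum_tail_abs_le:
  assumes M: "\<And>y. \<bar>g y\<bar> \<le> M" and "m < n"
  shows "\<bar>birkhoff_sum \<phi> g n x - birkhoff_sum \<phi> g m (\<phi> x)\<bar> \<le> real (n - m) * M"
proof -
  have "birkhoff_sum \<phi> g n x
      = g x + birkhoff_sum \<phi> g m (\<phi> x) + birkhoff_sum \<phi> g (n - 1 - m) ((\<phi> ^^ m) (\<phi> x))"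
    using birkhoff_sum_add[of \<phi> g 1 "m + (n - 1 - m)" x] birkhoff_sum_add[of \<phi> g m "n - 1 - m" "\<phi> x"]
      \<open>m < n\<close> by simp
  moreover have "\<bar>birkhoff_sum \<phi> g (n - 1 - m) ((\<phi> ^^ m) (\<phi> x))\<bar> \<le> real (n - 1 - m) * M"
    using M by (rule birkhoff_sum_abs_le)
  moreover have "real (n - 1 - m) * M + M = real (n - m) * M"
    using \<open>m < n\<close> by (simp add: of_nat_diff algebra_simps)
  ultimately show ?thesis
    using M[of x] by linarith
qed

text \<open>Splitting \<open>n = (i + 1) + q k + r\<close> for each offset \<open>i < k\<close> (the first block is nonempty, as the
  defect bound requires) and averaging over the offsets compares \<open>G\<^sub>n\<close> with \<open>S\<^sub>n G\<^sub>k / k\<close>; the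
  boundary terms only involve \<open>G\<^sub>1, \<dots>, G\<^sub>3\<^sub>k\<close>.\<close>

lemma additivity_defect_offset_estimate:
  assumes W: "additivity_defect_le \<phi> G C" and "k \<ge> 1" and "i < k"
    and q: "q * k + 2 * k \<le> n" "n < q * k + 3 * k"
    and M: "\<And>m y. 1 \<le> m \<Longrightarrow> m \<le> 3 * k \<Longrightarrow> \<bar>G m y\<bar> \<le> M"
    and D: "\<And>m. 1 \<le> m \<Longrightarrow> m \<le> k \<Longrightarrow> C m \<le> D"
  shows "\<bar>G n x - (\<Sum>j<q. G k ((\<phi> ^^ (j * k + (i + 1))) x))\<bar> \<le> D + real q * C k + 2 * M"
proof -
  define r where "r = n - (i + 1) - q * k"
  have "r \<ge> 1" "r \<le> 3 * k" and n: "n = (i + 1) + (q * k + r)"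
    using q \<open>i < k\<close> unfolding r_def by linarith+
  have "\<bar>G n x - G (i + 1) x - (\<Sum>j<q. G k ((\<phi> ^^ (j * k + (i + 1))) x))
      - G r ((\<phi> ^^ (q * k + (i + 1))) x)\<bar> \<le> C (i + 1) + real q * C k"
    unfolding n by (rule additivity_defect_split[OF W \<open>k \<ge> 1\<close> _ \<open>r \<ge> 1\<close>]) simp
  moreover have "\<bar>G (i + 1) x\<bar> \<le> M" "\<bar>G r ((\<phi> ^^ (q * k + (i + 1))) x)\<bar> \<le> M" "C (i + 1) \<le> D"
    using M[of "i + 1" x] M[of r "(\<phi> ^^ (q * k + (i + 1))) x"] D[of "i + 1"] \<open>i < k\<close>
      \<open>r \<ge> 1\<close> \<open>r \<le> 3 * k\<close> by simp_all
  ultimately show ?thesis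
    by linarith
qed

lemma additivity_defect_average_estimate:
  assumes W: "additivity_defect_le \<phi> G C" and "k \<ge> 1" and "3 * k \<le> n"
    and M: "\<And>m y. 1 \<le> m \<Longrightarrow> m \<le> 3 * k \<Longrightarrow> \<bar>G m y\<bar> \<le> M"
    and D: "\<And>m. 1 \<le> m \<Longrightarrow> m \<le> k \<Longrightarrow> C m \<le> D"
  shows "\<bar>G n x - birkhoff_sum \<phi> (G k) n x / real k\<bar> \<le> D + 5 * M + real n * C k / real k"
proof -
  define q where "q = n div k - 2"
  note q = div_minus_two_mult_bounds[OF \<open>k \<ge> 1\<close> \<open>3 * k \<le> n\<close>, folded q_def]
  define T where "T = birkhoff_sum \<phi> (G k) (q * k) (\<phi> x)"
  have "0 \<le> C k"
    using W \<open>k \<ge> 1\<close> unfolding additivity_defect_le_def by (meson abs_ge_zero order_trans order_refl)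
  note offset = additivity_defect_offset_estimate[OF W \<open>k \<ge> 1\<close> _ q M D]
  have blocks: "(\<Sum>i<k. \<Sum>j<q. G k ((\<phi> ^^ (j * k + (i + 1))) x)) = T"
    unfolding T_def birkhoff_sum_def sum_blocks[where h = "\<lambda>m. G k ((\<phi> ^^ m) (\<phi> x))", symmetric]
    by (simp add: funpow_swap1)
  have "\<bar>G n x - T / real k\<bar> \<le> D + real q * C k + 2 * M"
    unfolding blocks[symmetric] by (rule abs_diff_average_le[OF \<open>k \<ge> 1\<close> offset])
  moreover have "\<bar>birkhoff_sum \<phi> (G k) n x - T\<bar> \<le> 3 * real k * M"
  proof -
    have "\<bar>birkhoff_sum \<phi> (G k) n x - T\<bar> \<le> real (n - q * k) * M"
      unfolding T_def using M \<open>k \<ge> 1\<close> q by (intro birkhoff_sum_tail_abs_le) auto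
    also have "\<dots> \<le> 3 * real k * M"
    proof (rule mult_right_mono)
      have "n - q * k \<le> 3 * k"
        using q by linarith
      then show "real (n - q * k) \<le> 3 * real k"
        by (metis of_nat_le_iff of_nat_mult of_nat_numeral)
      show "0 \<le> M"
        using M[of 1 x] \<open>k \<ge> 1\<close> by linarith
    qed
    finally show ?thesis .
  qed
  then have "\<bar>T / real k - birkhoff_sum \<phi> (G k) n x / real k\<bar> \<le> 3 * M"
    using \<open>k \<ge> 1\<close> by (simp add: diff_divide_distrib[symmetric] abs_minus_commute divide_le_eq mult_ac)
  moreover have "real q * C k \<le> real n * C k / real k"
  proof -
    have "real q * real k \<le> real n"
      using q by (metis le_add1 le_trans of_nat_le_iff of_nat_mult)
    then show ?thesis
      using \<open>k \<ge> 1\<close> \<open>0 \<le> C k\<close> by (simp add: le_divide_eq mult_left_mono mult.commute mult.left_commute)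
  qed
  ultimately show ?thesis
    by linarith
qed

lemma additivity_defect_average_bound:
  assumes bounded: "\<forall>n\<ge>1. bounded (range (G n))" and W: "additivity_defect_le \<phi> G C" and "k \<ge> 1"
  shows "\<exists>A. \<forall>n\<ge>3 * k. \<forall>x. \<bar>G n x - birkhoff_sum \<phi> (G k) n x / real k\<bar> \<le> A + real n * C k / real k"
proof -
  have "bounded (\<Union>m\<in>{1..3 * k}. range (G m))"
    using bounded by (intro bounded_UN) auto
  then obtain M where M: "\<And>m y. 1 \<le> m \<Longrightarrow> m \<le> 3 * k \<Longrightarrow> \<bar>G m y\<bar> \<le> M"
    unfolding bounded_iff by fastforce
  have "bdd_above (C ` {1..k})"
    by (rule bdd_above_finite) simp
  then obtain D where D: "\<And>m. 1 \<le> m \<Longrightarrow> m \<le> k \<Longrightarrow> C m \<le> D"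
    unfolding bdd_above_def by fastforce
  show ?thesis
    using additivity_defect_average_estimate[OF W \<open>k \<ge> 1\<close> _ M D] by blast
qed

lemma weakly_almost_additive_approximates_averaged:
  assumes bounded: "\<forall>n\<ge>1. bounded (range (G n))" and "weakly_almost_additive \<phi> G"
  shows "uniformly_approximates \<phi> G (averaged G)"
proof -
  obtain C where C: "(\<lambda>n. C n / real n) \<longlonglongrightarrow> 0" and W: "additivity_defect_le \<phi> G C"
    using assms(2) unfolding weakly_almost_additive_iff by blast
  show ?thesis
    unfolding uniformly_approximates_def
  proof (intro allI impI)
    fix \<delta> :: real assume "\<delta> > 0"
    have "\<forall>\<^sub>F k in sequentially. C k / real k < \<delta> / 2"
      by (rule order_tendstoD(2)[OF C]) (use \<open>\<delta> > 0\<close> in simp)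
    then show "\<forall>\<^sub>F k in sequentially. \<forall>\<^sub>F n in sequentially.
        \<forall>x. \<bar>G n x - birkhoff_sum \<phi> (averaged G k) n x\<bar> \<le> \<delta> * real n"
      using eventually_ge_at_top[of 1]
    proof eventually_elim
      case (elim k)
      then obtain A where A: "\<And>n x. 3 * k \<le> n \<Longrightarrow>
          \<bar>G n x - birkhoff_sum \<phi> (G k) n x / real k\<bar> \<le> A + real n * C k / real k"
        using additivity_defect_average_bound[OF bounded W] by blast
      obtain N :: nat where N: "2 * A / \<delta> \<le> real N"
        using real_arch_simple by blast
      show ?case
      proof (intro eventually_sequentiallyI[of "max (3 * k) N"] allI)
        fix n x assume n: "max (3 * k) N \<le> n"
        have "2 * A \<le> \<delta> * real N"
          using N \<open>\<delta> > 0\<close> by (simp add: divide_le_eq mult.commute)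
        also have "\<dots> \<le> \<delta> * real n"
          using n \<open>\<delta> > 0\<close> by simp
        finally have "A \<le> \<delta> / 2 * real n"
          by simp
        moreover have "real n * (C k / real k) \<le> real n * (\<delta> / 2)"
          using \<open>C k / real k < \<delta> / 2\<close> by (intro mult_left_mono) auto
        ultimately show "\<bar>G n x - birkhoff_sum \<phi> (averaged G k) n x\<bar> \<le> \<delta> * real n"
          using A[of n x] n unfolding birkhoff_sum_averaged by (simp add: mult.commute)
      qed
    qed
  qed
qed

lemma bounded_range_continuous_on:
  fixes g :: "'a::topological_space \<Rightarrow> real"
  assumes "compact (UNIV :: 'a set)" and "continuous_on UNIV g"
  shows "bounded (range g)"
  using compact_imp_bounded[OF compact_continuous_image[OF assms(2,1)]] .

lemma bfun_continuous_on:
  fixes g :: "'a::metric_space \<Rightarrow> real"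
  assumes "compact (UNIV :: 'a set)" and "continuous_on UNIV g"
  shows "bfun g"
  unfolding bfun_def
  by (intro conjI borel_measurable_continuous_onI bounded_range_continuous_on assms)

lemma asymptotically_additive_birkhoff_sum:
  assumes "continuous_on UNIV g" and "\<forall>n\<ge>1. G n = birkhoff_sum \<phi> g n"
  shows "asymptotically_additive \<phi> G"
  unfolding asymptotically_additive_def
  by (intro exI[of _ "\<lambda>k. g"] conjI allI asymp_approx_birkhoff_sum assms)

lemma asymptotically_additive_iff_uniformly_approximates:
  fixes \<phi> :: "'a::metric_space \<Rightarrow> 'a"
  assumes compact: "compact (UNIV :: 'a set)" and bounded: "\<forall>n\<ge>1. bounded (range (G n))"
  shows "asymptotically_additive \<phi> G \<longleftrightarrow>
    (\<exists>Gk. (\<forall>k. continuous_on UNIV (Gk k)) \<and> uniformly_approximates \<phi> G Gk)"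
  unfolding asymptotically_additive_def
  by (auto simp: asymp_approx_iff_uniformly_approximates[OF bounded]
      bounded_range_continuous_on[OF compact])

lemma cond5_iff_uniformly_approximates_averaged:
  assumes "\<forall>n\<ge>1. bounded (range (G n))"
  shows "cond5 \<phi> G \<longleftrightarrow> uniformly_approximates \<phi> G (averaged G)"
  by (simp add: cond5_iff_asymp_approx_averaged asymp_approx_iff_uniformly_approximates
      assms bounded_averaged)

lemma cond5_of_bounded_approximants:
  assumes bounded: "\<forall>n\<ge>1. bounded (range (G n))"
    and "\<forall>k. bfun (Gk k)" and "asymp_approx \<phi> G Gk"
  shows "cond5 \<phi> G"
proof -
  have bounded_Gk: "\<And>k. bounded (range (Gk k))"
    using assms(2) by (simp add: bfun_def)
  with assms(3) have "uniformly_approximates \<phi> G Gk"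
    by (simp add: asymp_approx_iff_uniformly_approximates[OF bounded])
  then show ?thesis
    unfolding cond5_iff_uniformly_approximates_averaged[OF bounded]
    by (rule uniformly_approximates_averaged) (rule bounded_Gk)
qed

lemma weakly_almost_additive_imp_cond5:
  assumes "\<forall>n\<ge>1. bounded (range (G n))" and "weakly_almost_additive \<phi> G"
  shows "cond5 \<phi> G"
  using assms by (simp add: cond5_iff_uniformly_approximates_averaged
      weakly_almost_additive_approximates_averaged)

lemma asymptotically_additive_of_cond5_continuous:
  assumes "\<forall>n\<ge>1. continuous_on UNIV (G n)" and "cond5 \<phi> G"
  shows "asymptotically_additive \<phi> G"
  unfolding asymptotically_additive_def using assms(2)
  by (intro exI[of _ "averaged G"] conjI allI continuous_on_averaged assms(1))
    (simp add: cond5_iff_asymp_approx_averaged)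

context
  fixes \<phi> :: "'a::metric_space \<Rightarrow> 'a" and G :: "nat \<Rightarrow> 'a \<Rightarrow> real"
  assumes compact: "compact (UNIV :: 'a set)" and cont: "continuous_on UNIV \<phi>"
    and bounded: "\<forall>n\<ge>1. bounded (range (G n))"
begin

lemma asymptotically_additive_iff_tempered_cond5:
  "asymptotically_additive \<phi> G \<longleftrightarrow> tempered_variation \<phi> G \<and> cond5 \<phi> G"
proof
  assume "asymptotically_additive \<phi> G"
  then obtain Gk where "\<forall>k. continuous_on UNIV (Gk k)" and approx: "uniformly_approximates \<phi> G Gk"
    by (auto simp: asymptotically_additive_iff_uniformly_approximates[OF compact bounded])
  then have "tempered_variation \<phi> G"
    using tempered_variation_of_continuous_approximants[OF compact approx] by blast
  moreover have "cond5 \<phi> G"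
    unfolding cond5_iff_uniformly_approximates_averaged[OF bounded] using approx
    by (rule uniformly_approximates_averaged)
      (simp add: bounded_range_continuous_on[OF compact] \<open>\<forall>k. continuous_on UNIV (Gk k)\<close>)
  ultimately show "tempered_variation \<phi> G \<and> cond5 \<phi> G" ..
next
  assume "tempered_variation \<phi> G \<and> cond5 \<phi> G"
  then have "\<exists>Gk. (\<forall>k. continuous_on UNIV (Gk k)) \<and> uniformly_approximates \<phi> G Gk"
    by (intro uniformly_approximates_choice continuous_approximant[OF compact cont bounded])
      (simp_all add: cond5_iff_uniformly_approximates_averaged[OF bounded])
  then show "asymptotically_additive \<phi> G"
    by (simp add: asymptotically_additive_iff_uniformly_approximates[OF compact bounded])
qed

lemma asymptotically_additive_iff_tempered_bounded_approx:
  "asymptotically_additive \<phi> G \<longleftrightarrow>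
    tempered_variation \<phi> G \<and> (\<exists>Gk. (\<forall>k. bfun (Gk k)) \<and> asymp_approx \<phi> G Gk)"
proof
  assume AA: "asymptotically_additive \<phi> G"
  then obtain Gk where "\<forall>k. continuous_on UNIV (Gk k)" and approx: "asymp_approx \<phi> G Gk"
    unfolding asymptotically_additive_def by blast
  then have "\<forall>k. bfun (Gk k)"
    by (simp add: bfun_continuous_on[OF compact])
  with AA approx show "tempered_variation \<phi> G \<and> (\<exists>Gk. (\<forall>k. bfun (Gk k)) \<and> asymp_approx \<phi> G Gk)"
    by (auto simp: asymptotically_additive_iff_tempered_cond5)
qed (auto simp: asymptotically_additive_iff_tempered_cond5 intro: cond5_of_bounded_approximants[OF bounded])

lemma asymptotically_additive_iff_bounded_approx_variation:
  "asymptotically_additive \<phi> G \<longleftrightarrow>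
    (\<exists>Gk. (\<forall>k. bfun (Gk k)) \<and> asymp_approx \<phi> G Gk \<and>
      (\<exists>L :: nat \<Rightarrow> ereal.
        (\<forall>k. ((\<lambda>\<epsilon>. limsup (\<lambda>n. var_n \<phi> (\<lambda>m. birkhoff_sum \<phi> (Gk k) m) n \<epsilon>)) \<longlongrightarrow> L k) (at_right 0))
        \<and> L \<longlonglongrightarrow> 0))"
proof
  assume "asymptotically_additive \<phi> G"
  then obtain Gk where cont_Gk: "\<forall>k. continuous_on UNIV (Gk k)" and "asymp_approx \<phi> G Gk"
    unfolding asymptotically_additive_def by blast
  moreover have "((\<lambda>\<epsilon>. limsup (\<lambda>n. var_n \<phi> (\<lambda>m. birkhoff_sum \<phi> (Gk k) m) n \<epsilon>)) \<longlongrightarrow> 0) (at_right 0)"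
    for k
    using tempered_variation_birkhoff_sum[OF compact] cont_Gk by (simp add: tempered_variation_def)
  ultimately show "\<exists>Gk. (\<forall>k. bfun (Gk k)) \<and> asymp_approx \<phi> G Gk \<and> (\<exists>L :: nat \<Rightarrow> ereal.
      (\<forall>k. ((\<lambda>\<epsilon>. limsup (\<lambda>n. var_n \<phi> (\<lambda>m. birkhoff_sum \<phi> (Gk k) m) n \<epsilon>)) \<longlongrightarrow> L k) (at_right 0))
      \<and> L \<longlonglongrightarrow> 0)"
    by (intro exI[of _ Gk] conjI exI[of _ "\<lambda>k. 0"]) (simp_all add: bfun_continuous_on[OF compact])
next
  assume "\<exists>Gk. (\<forall>k. bfun (Gk k)) \<and> asymp_approx \<phi> G Gk \<and> (\<exists>L :: nat \<Rightarrow> ereal.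
      (\<forall>k. ((\<lambda>\<epsilon>. limsup (\<lambda>n. var_n \<phi> (\<lambda>m. birkhoff_sum \<phi> (Gk k) m) n \<epsilon>)) \<longlongrightarrow> L k) (at_right 0))
      \<and> L \<longlonglongrightarrow> 0)"
  then obtain Gk L where bfun_Gk: "\<forall>k. bfun (Gk k)" and approx: "asymp_approx \<phi> G Gk"
    and var: "\<forall>k. ((\<lambda>\<epsilon>. limsup (\<lambda>n. var_n \<phi> (\<lambda>m. birkhoff_sum \<phi> (Gk k) m) n \<epsilon>)) \<longlongrightarrow> L k) (at_right 0)"
    and "L \<longlonglongrightarrow> 0"
    by blast
  have "uniformly_approximates \<phi> G Gk"
    using approx bfun_Gk by (simp add: asymp_approx_iff_uniformly_approximates[OF bounded] bfun_def)
  then have "tempered_variation \<phi> G"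
    using var \<open>L \<longlonglongrightarrow> 0\<close> by (blast intro: tempered_variation_of_approximants)
  with bfun_Gk approx show "asymptotically_additive \<phi> G"
    by (auto simp: asymptotically_additive_iff_tempered_bounded_approx)
qed

lemma asymptotically_additive_iff_cond5_continuous:
  assumes "\<forall>n\<ge>1. continuous_on UNIV (G n)"
  shows "asymptotically_additive \<phi> G \<longleftrightarrow> cond5 \<phi> G"
  using asymptotically_additive_of_cond5_continuous[OF assms] asymptotically_additive_iff_tempered_cond5
  by meson

end

theorem theorem6p1:
  fixes \<phi> :: "'a::metric_space \<Rightarrow> 'a" and G :: "nat \<Rightarrow> 'a \<Rightarrow> real"
  assumes "compact (UNIV :: 'a set)"
    and "continuous_on UNIV \<phi>"
    and "\<forall>n\<ge>1. bfun (G n)"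
  shows
   "((\<exists>g. continuous_on UNIV g \<and> (\<forall>n\<ge>1. G n = birkhoff_sum \<phi> g n))
        \<longrightarrow> asymptotically_additive \<phi> G)
  \<and> ((\<exists>g. bfun g \<and> (\<forall>n\<ge>1. G n = birkhoff_sum \<phi> g n)) \<and> tempered_variation \<phi> G
        \<longrightarrow> asymptotically_additive \<phi> G)
  \<and> (weakly_almost_additive \<phi> G \<and> (\<forall>n\<ge>1. continuous_on UNIV (G n))
        \<longrightarrow> asymptotically_additive \<phi> G)
  \<and> (weakly_almost_additive \<phi> G \<and> tempered_variation \<phi> G
        \<longrightarrow> asymptotically_additive \<phi> G)
  \<and> ((\<forall>n\<ge>1. continuous_on UNIV (G n))
        \<longrightarrow> (asymptotically_additive \<phi> G \<longleftrightarrow> cond5 \<phi> G))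
  \<and> (asymptotically_additive \<phi> G \<longleftrightarrow> tempered_variation \<phi> G \<and> cond5 \<phi> G)
  \<and> (asymptotically_additive \<phi> G \<longleftrightarrow>
        tempered_variation \<phi> G \<and> (\<exists>Gk. (\<forall>k. bfun (Gk k)) \<and> asymp_approx \<phi> G Gk))
  \<and> (asymptotically_additive \<phi> G \<longleftrightarrow>
        (\<exists>Gk. (\<forall>k. bfun (Gk k)) \<and> asymp_approx \<phi> G Gk \<and>
           (\<exists>L :: nat \<Rightarrow> ereal.
              (\<forall>k. ((\<lambda>\<epsilon>. limsup (\<lambda>n. var_n \<phi> (\<lambda>m. birkhoff_sum \<phi> (Gk k) m) n \<epsilon>)) \<longlongrightarrow> L k) (at_right 0))
              \<and> L \<longlonglongrightarrow> 0)))"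
proof -
  have bounded: "\<forall>n\<ge>1. bounded (range (G n))"
    using assms(3) by (simp add: bfun_def)
  note tempered_cond5 = asymptotically_additive_iff_tempered_cond5[OF assms(1,2) bounded]
    and tempered_bounded = asymptotically_additive_iff_tempered_bounded_approx[OF assms(1,2) bounded]
    and cond5_continuous = asymptotically_additive_iff_cond5_continuous[OF assms(1,2) bounded]
    and waa = weakly_almost_additive_imp_cond5[OF bounded]
  show ?thesis
  proof (intro conjI impI; (elim conjE exE)?)
    show "asymptotically_additive \<phi> G"
      if "continuous_on UNIV g" "\<forall>n\<ge>1. G n = birkhoff_sum \<phi> g n" for g
      using that by (rule asymptotically_additive_birkhoff_sum)
    show "asymptotically_additive \<phi> G"
      if "bfun g" "\<forall>n\<ge>1. G n = birkhoff_sum \<phi> g n" "tempered_variation \<phi> G" for g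
      unfolding tempered_bounded using that(1,3) asymp_approx_birkhoff_sum[OF that(2)]
      by (intro conjI exI[of _ "\<lambda>k. g"]) simp_all
    show "asymptotically_additive \<phi> G"
      if "weakly_almost_additive \<phi> G" "\<forall>n\<ge>1. continuous_on UNIV (G n)"
      using cond5_continuous[OF that(2)] waa[OF that(1)] by simp
    show "asymptotically_additive \<phi> G"
      if "weakly_almost_additive \<phi> G" "tempered_variation \<phi> G"
      unfolding tempered_cond5 using that waa by simp
    show "asymptotically_additive \<phi> G \<longleftrightarrow> cond5 \<phi> G"
      if "\<forall>n\<ge>1. continuous_on UNIV (G n)"
      using that by (rule cond5_continuous)
  qed (fact tempered_cond5 tempered_bounded
      asymptotically_additive_iff_bounded_approx_variation[OF assms(1,2) bounded])+
qed

end
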